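(* Let $n\ge5$ be odd, $k=\frac{n-3}{2}$, and let $V$ be an $n$-element set with $V=\{v_1,\dots,v_{2k+1},s,t\}$. Define $a\colon V^+\times V^-\to\mathbb{Z}$ (where $V^\pm=\{v^\pm\colon v\in V\}$) by $a(u^+,u^-)=0$ for $u\in V$; $a(v_i^+,v_j^-)=\bigl|2k+1-2|i-j|\bigr|$ for $i\ne j$; $a(u^+,v^-)=k$ if exactly one of $u,v$ lies in $\{s,t\}$; and $a(s^+,t^-)=a(t^+,s^-)=1$. Let $\mu\in\mathbb{R}\setminus\{0\}$ and $\lambda\in\mathbb{R}^{V^+\cup V^-}$, and define $a^{\mu,\lambda}(u^+,v^-)=\mu\, a(u^+,v^-)+\lambda_{u^+}+\lambda_{v^-}$ for all $u,v\in V$. If all entries $a^{\mu,\lambda}(u^+,v^-)$ are integers, then (1) $\max_{u,v\in V}|a^{\mu,\lambda}(u^+,v^-)|\ge\frac{n-4}{2}$, and (2) the number of distinct values among $\{a^{\mu,\lambda}(u^+,v^-)\colon u,v\in V\}$ is at least $\sqrt{\frac{n-1}{2}}$.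
   Context: The function $a$ is the coefficient vector (indexed by the edges $\{u^+,v^-\}$ of the complete bipartite graph on $V^+\cup V^-$) of the canonical transformation of the constraint for the dominant of the odd cycle polytope of $K_n$ induced by the cycle $(v_1,\dots,v_{2k+1})$; the vectors $a^{\mu,\lambda}$ are exactly the coefficient vectors obtained from it by scaling with $\mu$ and adding linear combinations of the degree equations $y(\delta(w))=1$. *)

theory Defs
  imports "HOL-Analysis.Analysis"
begin

datatype vtx = Cyc nat | S | T

definition Vset :: "nat \<Rightarrow> vtx set" where
  "Vset k = (Cyc ` {1..2*k+1}) \<union> {S, T}"

fun acoef :: "nat \<Rightarrow> vtx \<Rightarrow> vtx \<Rightarrow> int" where
  "acoef k (Cyc i) (Cyc j) =
     (if i = j then 0 else \<bar>2 * int k + 1 - 2 * \<bar>int i - int j\<bar>\<bar>)"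
| "acoef k S S = 0"
| "acoef k T T = 0"
| "acoef k S T = 1"
| "acoef k T S = 1"
| "acoef k (Cyc i) S = int k"
| "acoef k (Cyc i) T = int k"
| "acoef k S (Cyc j) = int k"
| "acoef k T (Cyc j) = int k"

text \<open>a^{\<mu>,\<lambda>}(u^+, v^-) = \<mu> a(u^+,v^-) + \<lambda>_{u^+} + \<lambda>_{v^-};
  \<lambda> on V^+ \<union> V^- is given by the pair (lp, lm).\<close>
definition amulam :: "nat \<Rightarrow> real \<Rightarrow> (vtx \<Rightarrow> real) \<Rightarrow> (vtx \<Rightarrow> real) \<Rightarrow> vtx \<Rightarrow> vtx \<Rightarrow> real" where
  "amulam k \<mu> lp lm u v = \<mu> * of_int (acoef k u v) + lp u + lm v"

end

theory Submission
  imports Defs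
begin

text \<open>Two-by-two cross differences of the entries of a^{\<mu>,\<lambda>} do not see \<lambda>, so
  they equal \<mu> times the corresponding cross difference of a. The cross difference
  of a at (s,t),(v_1,s) is 1, which makes \<mu> an integer, hence |\<mu>| \<ge> 1; the one at
  (v_1,v_2),(v_2,v_1) is 4k - 2, so one of the four entries involved has absolute
  value at least (2k - 1)/2. Row differences of a^{\<mu>,\<lambda>} only shift by a constant,
  and the rows v_1 and s of a differ by the k + 1 distinct values k, k - 1, k - 3, ...,
  1 - k on the columns s, v_2, ..., v_{k+1}; so the set of values of a^{\<mu>,\<lambda>} has at
  least k + 1 differences and therefore at least sqrt (k + 1) elements.\<close>

lemma amulam_cross_difference:
  "amulam k \<mu> lp lm x y + amulam k \<mu> lp lm x' y' - amulam k \<mu> lp lm x y' - amulam k \<mu> lp lm x' y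
   = \<mu> * of_int (acoef k x y + acoef k x' y' - acoef k x y' - acoef k x' y)"
  by (simp add: amulam_def algebra_simps)

lemma amulam_row_difference:
  "amulam k \<mu> lp lm x w - amulam k \<mu> lp lm x' w = \<mu> * of_int (acoef k x w - acoef k x' w) + (lp x - lp x')"
  by (simp add: amulam_def algebra_simps)

lemma S_in_Vset: "S \<in> Vset k"
  and T_in_Vset: "T \<in> Vset k"
  and Cyc_in_Vset: "1 \<le> j \<Longrightarrow> j \<le> 2 * k + 1 \<Longrightarrow> Cyc j \<in> Vset k"
  by (auto simp: Vset_def)

lemma finite_Vset: "finite (Vset k)"
  by (simp add: Vset_def)

lemma abs_mu_ge_1:
  assumes "\<mu> \<noteq> 0" and "\<forall>u\<in>Vset k. \<forall>v\<in>Vset k. amulam k \<mu> lp lm u v \<in> \<int>"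
  shows "1 \<le> \<bar>\<mu>\<bar>"
proof -
  have "\<mu> = amulam k \<mu> lp lm S T + amulam k \<mu> lp lm (Cyc 1) S
            - amulam k \<mu> lp lm S S - amulam k \<mu> lp lm (Cyc 1) T"
    by (simp add: amulam_cross_difference)
  also have "\<dots> \<in> \<int>"
    using assms(2) S_in_Vset T_in_Vset Cyc_in_Vset[of 1 k] by (intro Ints_add Ints_diff) auto
  finally show ?thesis
    using assms(1) by (rule Ints_nonzero_abs_ge1)
qed

lemma Max_abs_ge_cross_difference:
  fixes f :: "'a \<Rightarrow> 'b :: linordered_field"
  assumes "finite P" and "{p, q, r, s} \<subseteq> P"
  shows "\<bar>f p + f q - f r - f s\<bar> / 4 \<le> (MAX x\<in>P. \<bar>f x\<bar>)"
proof -
  let ?M = "MAX x\<in>P. \<bar>f x\<bar>"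
  have le_Max: "\<bar>f x\<bar> \<le> ?M" if "x \<in> {p, q, r, s}" for x
    using assms that by (intro Max_ge) auto
  have "\<bar>f p + f q - f r - f s\<bar> \<le> \<bar>f p\<bar> + \<bar>f q\<bar> + \<bar>f r\<bar> + \<bar>f s\<bar>"
    using abs_triangle_ineq4[of "f p + f q - f r" "f s"] abs_triangle_ineq4[of "f p + f q" "f r"]
      abs_triangle_ineq[of "f p" "f q"]
    by linarith
  also have "\<dots> \<le> 4 * ?M"
    using le_Max[of p] le_Max[of q] le_Max[of r] le_Max[of s] by simp
  finally show ?thesis
    by simp
qed

lemma Max_abs_amulam_ge:
  assumes "1 \<le> k" and "\<mu> \<noteq> 0" and "\<forall>u\<in>Vset k. \<forall>v\<in>Vset k. amulam k \<mu> lp lm u v \<in> \<int>"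
  shows "(2 * real k - 1) / 2 \<le> (MAX p \<in> Vset k \<times> Vset k. \<bar>amulam k \<mu> lp lm (fst p) (snd p)\<bar>)"
proof -
  let ?b = "\<lambda>p. amulam k \<mu> lp lm (fst p) (snd p)"
  have "\<bar>?b (Cyc 1, Cyc 2) + ?b (Cyc 2, Cyc 1) - ?b (Cyc 1, Cyc 1) - ?b (Cyc 2, Cyc 2)\<bar>
        = \<bar>\<mu>\<bar> * (4 * real k - 2)"
    using assms(1) by (simp add: amulam_cross_difference abs_mult)
  also have "\<dots> \<ge> 4 * real k - 2"
    using abs_mu_ge_1[OF assms(2,3)] assms(1) by (simp add: mult_right_mono)
  finally have "(2 * real k - 1) / 2
      \<le> \<bar>?b (Cyc 1, Cyc 2) + ?b (Cyc 2, Cyc 1) - ?b (Cyc 1, Cyc 1) - ?b (Cyc 2, Cyc 2)\<bar> / 4"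
    by simp
  also have "\<dots> \<le> (MAX p \<in> Vset k \<times> Vset k. \<bar>?b p\<bar>)"
    using assms(1) Cyc_in_Vset[of 1 k] Cyc_in_Vset[of 2 k]
    by (intro Max_abs_ge_cross_difference) (auto simp: finite_Vset)
  finally show ?thesis .
qed

lemma inj_on_acoef_row_difference:
  "inj_on (\<lambda>w. acoef k (Cyc 1) w - acoef k S w) (insert S (Cyc ` {2..k+1}))"
  by (auto simp: inj_on_def)

lemma card_le_square_if_subset_differences:
  fixes D :: "'a :: ab_group_add set"
  assumes "finite D" and "A \<subseteq> {x - y | x y. x \<in> D \<and> y \<in> D}"
  shows "card A \<le> card D ^ 2"
proof -
  have "A \<subseteq> (\<lambda>(x, y). x - y) ` (D \<times> D)"
    using assms(2) by auto
  hence "card A \<le> card ((\<lambda>(x, y). x - y) ` (D \<times> D))"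
    using assms(1) by (intro card_mono) auto
  also have "\<dots> \<le> card (D \<times> D)"
    using assms(1) by (intro card_image_le) auto
  finally show ?thesis
    by (simp add: card_cartesian_product power2_eq_square)
qed

lemma card_amulam_values_ge:
  assumes "\<mu> \<noteq> 0"
  shows "sqrt (real k + 1) \<le> real (card {amulam k \<mu> lp lm u v | u v. u \<in> Vset k \<and> v \<in> Vset k})"
proof -
  define D where "D = {amulam k \<mu> lp lm u v | u v. u \<in> Vset k \<and> v \<in> Vset k}"
  define W where "W = insert S (Cyc ` {2..k+1})"
  let ?d = "\<lambda>w. amulam k \<mu> lp lm (Cyc 1) w - amulam k \<mu> lp lm S w"
  have "inj_on ?d W"
    using inj_on_acoef_row_difference[of k] assms
    by (simp add: amulam_row_difference inj_on_def W_def)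
  have "card W = k + 1"
    unfolding W_def by (subst card_insert_disjoint) (auto simp: card_image inj_on_def)
  hence "k + 1 = card (?d ` W)"
    using \<open>inj_on ?d W\<close> by (simp add: card_image)
  also have "\<dots> \<le> card D ^ 2"
  proof (rule card_le_square_if_subset_differences)
    show "finite D"
      unfolding D_def by (intro finite_image_set2) (simp_all add: finite_Vset)
    show "?d ` W \<subseteq> {x - y | x y. x \<in> D \<and> y \<in> D}"
      using S_in_Vset Cyc_in_Vset
      by (fastforce simp: D_def W_def)
  qed
  finally show ?thesis
    unfolding D_def by (intro real_le_lsqrt) (simp_all flip: of_nat_power)
qed

theorem lemma14:
  fixes n k :: nat and \<mu> :: real and lp lm :: "vtx \<Rightarrow> real"
  assumes "n \<ge> 5" and "odd n" and "k = (n - 3) div 2"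
    and "\<mu> \<noteq> 0"
    and "\<forall>u\<in>Vset k. \<forall>v\<in>Vset k. amulam k \<mu> lp lm u v \<in> \<int>"
  shows "(MAX p \<in> Vset k \<times> Vset k. \<bar>amulam k \<mu> lp lm (fst p) (snd p)\<bar>) \<ge> (real n - 4) / 2
         \<and> real (card {amulam k \<mu> lp lm u v | u v. u \<in> Vset k \<and> v \<in> Vset k})
           \<ge> sqrt ((real n - 1) / 2)"
proof -
  have n: "n = 2 * k + 3" and "1 \<le> k"
    using assms(1-3) by presburger+
  have bounds: "(real n - 4) / 2 = (2 * real k - 1) / 2" "(real n - 1) / 2 = real k + 1"
    using n by simp_all
  show ?thesis
    unfolding bounds
    using Max_abs_amulam_ge[OF \<open>1 \<le> k\<close> assms(4,5)] card_amulam_values_ge[OF assms(4)]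
    by blast
qed

end
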